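(* Let $\mu\ge0$ and define on $[0,\infty)$ $$\phi(x)=\pi e^{\mu x}Ai(\mu^2+x),\qquad \psi(x)=Ce^{\mu x}Ai(\mu^2+x)+e^{\mu x}Bi(\mu^2+x),$$ with $C=-\frac{\mu Bi(\mu^2)+Bi'(\mu^2)}{\mu Ai(\mu^2)+Ai'(\mu^2)}$. Then $\phi$ is strictly decreasing and $\psi$ is strictly increasing on $[0,\infty)$.
   Context: $Ai,Bi$ are the standard Airy functions, linearly independent solutions of $u''=xu$; on $[0,\infty)$, $Ai$ is positive and decreasing with $Ai(x)\to0$, and $Bi$ is positive and increasing with $Bi(x)\to\infty$ as $x\to\infty$. *)

theory Defs
  imports "HOL-Analysis.Analysis"
begin

text \<open>Airy functions via the standard Maclaurin series (DLMF 9.4.1--9.4.2).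
  The two basic even/odd-type solutions of u'' = x u:
  f(x) = sum_k 3^k (1/3)_k x^(3k) / (3k)!,  g(x) = sum_k 3^k (2/3)_k x^(3k+1) / (3k+1)!.\<close>

definition airy_f :: "real \<Rightarrow> real" where
  "airy_f x = (\<Sum>k. 3 ^ k * pochhammer (1/3) k * x ^ (3*k) / fact (3*k))"

definition airy_g :: "real \<Rightarrow> real" where
  "airy_g x = (\<Sum>k. 3 ^ k * pochhammer (2/3) k * x ^ (3*k+1) / fact (3*k+1))"

text \<open>Ai(0) = 1/(3^(2/3) Gamma(2/3)),  -Ai'(0) = 1/(3^(1/3) Gamma(1/3)).\<close>

definition airy_c1 :: real where
  "airy_c1 = 1 / (3 powr (2/3) * Gamma (2/3))"

definition airy_c2 :: real where
  "airy_c2 = 1 / (3 powr (1/3) * Gamma (1/3))"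

definition Ai :: "real \<Rightarrow> real" where
  "Ai x = airy_c1 * airy_f x - airy_c2 * airy_g x"

definition Bi :: "real \<Rightarrow> real" where
  "Bi x = sqrt 3 * (airy_c1 * airy_f x + airy_c2 * airy_g x)"

end

theory Submission
  imports Defs
begin

(*
  Ai and Bi are power series solutions of u'' = x u with constant Wronskian
  W = Ai Bi' - Ai' Bi = 2 sqrt 3 c1 c2 > 0. Integrating the Maclaurin series of Ai termwise
  against Gamma integrals gives pi Ai(x) = integral of exp(-t^3/3) Im(\<omega> exp(-\<omega> x t)) over
  t \<ge> 0, with \<omega> = exp(i pi/3); hence Ai is bounded on [0,\<infinity>). Boundedness and W > 0 force
  Ai > 0 > Ai' there, and a Riccati argument for Ai'/Ai gives Ai'(t)^2 > t Ai(t)^2, i.e.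
  a(t) = \<mu> Ai(t) + Ai'(t) < 0 for t \<ge> \<mu>^2. Since \<phi>'(x) = pi exp(\<mu> x) a(\<mu>^2 + x), \<phi> decreases.
  With b(t) = \<mu> Bi(t) + Bi'(t) we get \<psi>'(x) = exp(\<mu> x) (C a + b)(\<mu>^2 + x) and C = -(b/a)(\<mu>^2);
  as (b/a)' = (\<mu>^2 - t) W / a^2 < 0 for t > \<mu>^2, b/a drops below -C, so C a + b > 0.
*)

section \<open>Power series solutions of u'' = x u\<close>

definition power_series :: "(nat \<Rightarrow> real) \<Rightarrow> real \<Rightarrow> real" where
  "power_series c x = (\<Sum>n. c n * x ^ n)"

lemma power_series_zero [simp]: "power_series c 0 = c 0"
  unfolding power_series_def by (rule powser_zero)

text \<open>The recurrence below is u'' = x u for the Maclaurin coefficients c of u.\<close>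

lemma airy_recurrence_sq_fact_bounded:
  fixes c :: "nat \<Rightarrow> real"
  assumes rec: "\<And>n. c (n+3) * (real (n+3) * real (n+2)) = c n"
  shows "c n ^ 2 * fact n \<le> max (c 0 ^ 2) (max (c 1 ^ 2) (c 2 ^ 2 * 2))"
proof -
  let ?K = "max (c 0 ^ 2) (max (c 1 ^ 2) (c 2 ^ 2 * 2))"
  have step: "c (n+3) ^ 2 * fact (n+3) \<le> c n ^ 2 * fact n" for n
  proof -
    have fact: "fact (n+3) = real (n+3) * real (n+2) * real (n+1) * (fact n :: real)"
      by (simp add: fact_Suc algebra_simps numeral_3_eq_3)
    have pos: "real (n+3) * real (n+2) > 0" by simp
    have "c (n+3) = c n / (real (n+3) * real (n+2))"
      using rec[of n] pos by (simp add: eq_divide_eq)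
    then have "c (n+3) ^ 2 * fact (n+3)
        = (c n / (real (n+3) * real (n+2))) ^ 2 * (real (n+3) * real (n+2) * real (n+1) * fact n)"
      by (simp add: fact)
    also have "\<dots> = c n ^ 2 * fact n * (real (n+1) / (real (n+3) * real (n+2)))"
      using pos by (simp add: power2_eq_square divide_simps)
    also have "\<dots> \<le> c n ^ 2 * fact n * 1"
    proof (intro mult_left_mono)
      have "real (n+1) \<le> real (n+3) * real (n+2)" by (simp add: algebra_simps)
      then show "real (n+1) / (real (n+3) * real (n+2)) \<le> 1" using pos by (simp add: divide_le_eq_1)
    qed auto
    finally show ?thesis by simp
  qed
  have "c n ^ 2 * fact n \<le> ?K \<and> c (n+1) ^ 2 * fact (n+1) \<le> ?K \<and> c (n+2) ^ 2 * fact (n+2) \<le> ?K"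
  proof (induction n)
    case 0
    then show ?case by (simp add: numeral_2_eq_2 del: max.bounded_iff) (simp add: max_def)
  next
    case (Suc n)
    have "c (n+3) ^ 2 * fact (n+3) \<le> ?K" using step[of n] Suc.IH by linarith
    moreover have "n + 1 + 2 = n + 3" "n + 1 + 1 = n + 2" "Suc n = n + 1" by auto
    ultimately show ?case using Suc.IH by (simp only:)
  qed
  then show ?thesis by blast
qed

lemma summable_power_div_sqrt_fact: "summable (\<lambda>n. \<bar>y\<bar> ^ n / sqrt (fact n))"
proof (rule summable_ratio_test[where c = "1/2" and N = "nat \<lceil>4 * y^2\<rceil>"])
  fix n assume n: "n \<ge> nat \<lceil>4 * y^2\<rceil>"
  have "sqrt (fact (Suc n)) = sqrt (real (Suc n)) * sqrt (fact n)"
    by (simp add: real_sqrt_mult)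
  moreover have "2 * \<bar>y\<bar> \<le> sqrt (real (Suc n))"
  proof -
    have "(2 * \<bar>y\<bar>) ^ 2 \<le> real (Suc n)" using n by (simp add: power2_eq_square; linarith)
    then show ?thesis by (simp add: real_le_rsqrt)
  qed
  ultimately show "norm (\<bar>y\<bar> ^ Suc n / sqrt (fact (Suc n))) \<le> 1/2 * norm (\<bar>y\<bar> ^ n / sqrt (fact n))"
    using mult_left_mono[of "\<bar>y\<bar> * 2" "sqrt (real (Suc n))" "\<bar>y\<bar> ^ n"]
    by (auto simp: field_simps mult_right_mono)
qed simp

lemma summable_airy_recurrence:
  fixes c :: "nat \<Rightarrow> real"
  assumes rec: "\<And>n. c (n+3) * (real (n+3) * real (n+2)) = c n"
  shows "summable (\<lambda>n. c n * y ^ n)"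
proof -
  define K where "K = max (c 0 ^ 2) (max (c 1 ^ 2) (c 2 ^ 2 * 2))"
  have "\<bar>c n\<bar> \<le> sqrt K / sqrt (fact n)" for n
  proof -
    have "\<bar>c n\<bar> = sqrt (c n ^ 2 * fact n) / sqrt (fact n)"
      by (simp add: real_sqrt_mult)
    also have "\<dots> \<le> sqrt K / sqrt (fact n)"
      using airy_recurrence_sq_fact_bounded[OF rec, of n] unfolding K_def
      by (intro divide_right_mono) auto
    finally show ?thesis .
  qed
  then have "norm (c n * y ^ n) \<le> sqrt K * (\<bar>y\<bar> ^ n / sqrt (fact n))" for n
    using mult_right_mono[of "\<bar>c n\<bar>" "sqrt K / sqrt (fact n)" "\<bar>y\<bar> ^ n"]
    by (auto simp: abs_mult power_abs)
  then show ?thesis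
    by (intro summable_comparison_test[OF _ summable_mult[OF summable_power_div_sqrt_fact]]) auto
qed

lemma DERIV_power_series_airy_recurrence:
  fixes c :: "nat \<Rightarrow> real"
  assumes rec: "\<And>n. c (n+3) * (real (n+3) * real (n+2)) = c n" and c2: "c 2 = 0"
  shows "(power_series c has_real_derivative power_series (diffs c) x) (at x)"
    and "(power_series (diffs c) has_real_derivative x * power_series c x) (at x)"
proof -
  have summable: "\<And>y. summable (\<lambda>n. c n * y ^ n)" by (rule summable_airy_recurrence[OF rec])
  show "(power_series c has_real_derivative power_series (diffs c) x) (at x)"
    unfolding power_series_def by (rule termdiffs_strong_converges_everywhere[OF summable])
  have "(power_series (diffs c) has_real_derivative power_series (diffs (diffs c)) x) (at x)"
    unfolding power_series_def
    by (rule termdiffs_strong_converges_everywhere[OF termdiff_converges_all[OF summable]])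
  moreover have "power_series (diffs (diffs c)) x = x * power_series c x"
  proof -
    have "diffs (diffs c) (Suc n) * x ^ Suc n = c n * x ^ n * x" for n
      using rec[of n] by (simp add: diffs_def numeral_3_eq_3 algebra_simps)
    then have "(\<lambda>n. diffs (diffs c) (Suc n) * x ^ Suc n) sums (power_series c x * x)"
      unfolding power_series_def using sums_mult2[OF summable_sums[OF summable]]
      by (metis (no_types, lifting) sums_cong)
    then have "(\<lambda>n. diffs (diffs c) n * x ^ n) sums (power_series c x * x + diffs (diffs c) 0)"
      by (subst (asm) sums_Suc_iff) simp
    moreover have "diffs (diffs c) 0 = 0" using c2 by (simp add: diffs_def numeral_2_eq_2)
    ultimately show ?thesis unfolding power_series_def by (simp add: sums_iff mult.commute)
  qed
  ultimately show "(power_series (diffs c) has_real_derivative x * power_series c x) (at x)"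
    by simp
qed

section \<open>The Airy functions and their derivatives\<close>

definition airy_f_coeff :: "nat \<Rightarrow> real" where
  "airy_f_coeff n =
     (if n mod 3 = 0 then 3 ^ (n div 3) * pochhammer (1/3) (n div 3) / fact n else 0)"

definition airy_g_coeff :: "nat \<Rightarrow> real" where
  "airy_g_coeff n =
     (if n mod 3 = 1 then 3 ^ (n div 3) * pochhammer (2/3) (n div 3) / fact n else 0)"

lemma fact_add_3: "fact (n+3) = real (n+3) * real (n+2) * real (n+1) * (fact n :: real)"
  by (simp add: fact_Suc algebra_simps numeral_3_eq_3)

lemma divide_cancel_common_factors:
  "(a::real) \<noteq> 0 \<Longrightarrow> b \<noteq> 0 \<Longrightarrow> d \<noteq> 0 \<Longrightarrow> A * d / (a * b * d * F) * (a * b) = A / F"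
  by (cases "F = 0") (simp_all add: field_simps)

lemma airy_f_coeff_recurrence:
  "airy_f_coeff (n+3) * (real (n+3) * real (n+2)) = airy_f_coeff n"
proof (cases "n mod 3 = 0")
  case True
  then obtain k where n: "n = 3*k" by auto
  have "(3*k+3) div 3 = Suc k" "(3*k+3) mod 3 = 0" by simp_all
  then have "airy_f_coeff (n+3) * (real (n+3) * real (n+2))
      = 3^k * pochhammer (1/3) k * real (3*k+1)
        / (real (3*k+3) * real (3*k+2) * real (3*k+1) * fact (3*k)) * (real (3*k+3) * real (3*k+2))"
    unfolding airy_f_coeff_def n fact_add_3 by (simp add: pochhammer_Suc algebra_simps)
  also have "\<dots> = 3^k * pochhammer (1/3) k / fact (3*k)"
    by (rule divide_cancel_common_factors) auto
  finally show ?thesis unfolding n airy_f_coeff_def by simp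
qed (simp add: airy_f_coeff_def)

lemma airy_g_coeff_recurrence:
  "airy_g_coeff (n+3) * (real (n+3) * real (n+2)) = airy_g_coeff n"
proof (cases "n mod 3 = 1")
  case True
  then have "n = 3 * (n div 3) + 1" by (metis div_mult_mod_eq mult.commute)
  then obtain k where n: "n = 3*k+1" by blast
  have "(3*k+1+3) div 3 = Suc k" "(3*k+1) div 3 = k" "(3*k+1+3) mod 3 = 1" "(3*k+1) mod 3 = 1"
    by simp_all
  then have "airy_g_coeff (n+3) * (real (n+3) * real (n+2))
      = 3^k * pochhammer (2/3) k * real (3*k+2)
        / (real (3*k+4) * real (3*k+3) * real (3*k+2) * fact (3*k+1)) * (real (3*k+4) * real (3*k+3))"
    unfolding airy_g_coeff_def n fact_add_3 by (simp add: pochhammer_Suc algebra_simps)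
  also have "\<dots> = 3^k * pochhammer (2/3) k / fact (3*k+1)"
    by (rule divide_cancel_common_factors) auto
  also have "\<dots> = airy_g_coeff n"
    using \<open>(3*k+1) div 3 = k\<close> \<open>(3*k+1) mod 3 = 1\<close> unfolding n airy_g_coeff_def by simp
  finally show ?thesis .
qed (simp add: airy_g_coeff_def)

lemma airy_f_eq_power_series: "airy_f x = power_series airy_f_coeff x"
proof -
  have summable: "summable (\<lambda>n. airy_f_coeff n * x ^ n)"
    by (rule summable_airy_recurrence[OF airy_f_coeff_recurrence])
  have "(\<lambda>k. airy_f_coeff (3*k) * x ^ (3*k)) sums power_series airy_f_coeff x"
    unfolding power_series_def
  proof (subst sums_mono_reindex[where g = "\<lambda>k. 3*k"])
    show "strict_mono (\<lambda>k. 3*k::nat)" by (auto simp: strict_mono_def)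
    fix n assume "n \<notin> range (\<lambda>k. 3*k::nat)"
    moreover have "n = 3 * (n div 3) + n mod 3" by simp
    ultimately have "n mod 3 \<noteq> 0" by (metis add_0_right rangeI)
    then show "airy_f_coeff n * x ^ n = 0" by (simp add: airy_f_coeff_def)
  qed (rule summable_sums[OF summable])
  then show ?thesis unfolding airy_f_def by (simp add: sums_iff airy_f_coeff_def)
qed

lemma airy_g_eq_power_series: "airy_g x = power_series airy_g_coeff x"
proof -
  have summable: "summable (\<lambda>n. airy_g_coeff n * x ^ n)"
    by (rule summable_airy_recurrence[OF airy_g_coeff_recurrence])
  have "(\<lambda>k. airy_g_coeff (3*k+1) * x ^ (3*k+1)) sums power_series airy_g_coeff x"
    unfolding power_series_def
  proof (subst sums_mono_reindex[where g = "\<lambda>k. 3*k+1"])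
    show "strict_mono (\<lambda>k. 3*k+1::nat)" by (auto simp: strict_mono_def)
    fix n assume "n \<notin> range (\<lambda>k. 3*k+1::nat)"
    moreover have "n = 3 * (n div 3) + n mod 3" by simp
    ultimately have "n mod 3 \<noteq> 1" by (metis rangeI)
    then show "airy_g_coeff n * x ^ n = 0" by (simp add: airy_g_coeff_def)
  qed (rule summable_sums[OF summable])
  moreover have "Suc (3*k) div 3 = k" "Suc (3*k) mod 3 = 1" for k by presburger+
  ultimately show ?thesis unfolding airy_g_def by (simp add: sums_iff airy_g_coeff_def)
qed

lemma Ai_eq_power_series:
  "Ai = (\<lambda>x. airy_c1 * power_series airy_f_coeff x - airy_c2 * power_series airy_g_coeff x)"
  by (simp add: fun_eq_iff Ai_def airy_f_eq_power_series airy_g_eq_power_series)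

lemma Bi_eq_power_series:
  "Bi = (\<lambda>x. sqrt 3 * (airy_c1 * power_series airy_f_coeff x + airy_c2 * power_series airy_g_coeff x))"
  by (simp add: fun_eq_iff Bi_def airy_f_eq_power_series airy_g_eq_power_series)

definition Ai' :: "real \<Rightarrow> real" where
  "Ai' x = airy_c1 * power_series (diffs airy_f_coeff) x - airy_c2 * power_series (diffs airy_g_coeff) x"

definition Bi' :: "real \<Rightarrow> real" where
  "Bi' x = sqrt 3 * (airy_c1 * power_series (diffs airy_f_coeff) x
                     + airy_c2 * power_series (diffs airy_g_coeff) x)"

lemma airy_f_coeff_2: "airy_f_coeff 2 = 0" and airy_g_coeff_2: "airy_g_coeff 2 = 0"
  by (simp_all add: airy_f_coeff_def airy_g_coeff_def)

lemmas DERIV_power_series_airy_coeff =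
  DERIV_power_series_airy_recurrence[OF airy_f_coeff_recurrence airy_f_coeff_2]
  DERIV_power_series_airy_recurrence[OF airy_g_coeff_recurrence airy_g_coeff_2]

lemma DERIV_Ai: "(Ai has_real_derivative Ai' x) (at x)"
  unfolding Ai_eq_power_series Ai'_def
  by (auto intro!: derivative_eq_intros DERIV_power_series_airy_coeff)

lemma DERIV_Bi: "(Bi has_real_derivative Bi' x) (at x)"
  unfolding Bi_eq_power_series Bi'_def
  by (auto intro!: derivative_eq_intros DERIV_power_series_airy_coeff)

lemma DERIV_Ai': "(Ai' has_real_derivative x * Ai x) (at x)"
proof -
  have "(Ai' has_real_derivative
          airy_c1 * (x * power_series airy_f_coeff x) - airy_c2 * (x * power_series airy_g_coeff x)) (at x)"
    unfolding Ai'_def [abs_def]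
    by (auto intro!: derivative_eq_intros DERIV_power_series_airy_coeff)
  then show ?thesis by (simp add: Ai_eq_power_series algebra_simps)
qed

lemma DERIV_Bi': "(Bi' has_real_derivative x * Bi x) (at x)"
proof -
  have "(Bi' has_real_derivative
          sqrt 3 * (airy_c1 * (x * power_series airy_f_coeff x) + airy_c2 * (x * power_series airy_g_coeff x))) (at x)"
    unfolding Bi'_def [abs_def]
    by (auto intro!: derivative_eq_intros DERIV_power_series_airy_coeff)
  then show ?thesis by (simp add: Bi_eq_power_series algebra_simps)
qed

lemma DERIV_Ai_chain [derivative_intros]:
  "(f has_real_derivative f') (at x within s) \<Longrightarrow>
    ((\<lambda>x. Ai (f x)) has_real_derivative Ai' (f x) * f') (at x within s)"
  by (rule DERIV_chain2[OF DERIV_Ai])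

lemma DERIV_Bi_chain [derivative_intros]:
  "(f has_real_derivative f') (at x within s) \<Longrightarrow>
    ((\<lambda>x. Bi (f x)) has_real_derivative Bi' (f x) * f') (at x within s)"
  by (rule DERIV_chain2[OF DERIV_Bi])

lemma DERIV_Ai'_chain [derivative_intros]:
  "(f has_real_derivative f') (at x within s) \<Longrightarrow>
    ((\<lambda>x. Ai' (f x)) has_real_derivative (f x * Ai (f x)) * f') (at x within s)"
  by (rule DERIV_chain2[OF DERIV_Ai'])

lemma DERIV_Bi'_chain [derivative_intros]:
  "(f has_real_derivative f') (at x within s) \<Longrightarrow>
    ((\<lambda>x. Bi' (f x)) has_real_derivative (f x * Bi (f x)) * f') (at x within s)"
  by (rule DERIV_chain2[OF DERIV_Bi'])

lemma deriv_Ai: "deriv Ai = Ai'" and deriv_Bi: "deriv Bi = Bi'"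
  by (simp_all add: fun_eq_iff DERIV_imp_deriv[OF DERIV_Ai] DERIV_imp_deriv[OF DERIV_Bi])

lemma airy_c1_pos: "airy_c1 > 0" and airy_c2_pos: "airy_c2 > 0"
  by (simp_all add: airy_c1_def airy_c2_def)

lemma Ai_0: "Ai 0 = airy_c1" and Ai'_0: "Ai' 0 = - airy_c2"
  and Bi_0: "Bi 0 = sqrt 3 * airy_c1" and Bi'_0: "Bi' 0 = sqrt 3 * airy_c2"
  by (simp_all add: Ai_eq_power_series Bi_eq_power_series Ai'_def Bi'_def diffs_def
      airy_f_coeff_def airy_g_coeff_def)

lemma Ai_Bi_wronskian: "Ai x * Bi' x - Ai' x * Bi x = 2 * sqrt 3 * airy_c1 * airy_c2"
proof -
  define W where "W x = Ai x * Bi' x - Ai' x * Bi x" for x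
  have "(W has_real_derivative 0) (at x)" for x
    unfolding W_def by (auto intro!: derivative_eq_intros simp: algebra_simps)
  then have "W x = W 0" by (intro DERIV_isconst_all) auto
  then show ?thesis by (simp add: W_def Ai_0 Ai'_0 Bi_0 Bi'_0 algebra_simps)
qed

lemma Ai_Bi_wronskian_pos: "Ai x * Bi' x - Ai' x * Bi x > 0"
  unfolding Ai_Bi_wronskian using airy_c1_pos airy_c2_pos by simp

section \<open>An integral representation of Ai and its boundedness\<close>

lemma Gamma_one_third_mult_Gamma_two_thirds: "Gamma (1/3::real) * Gamma (2/3) = 2 * pi / sqrt 3"
proof -
  have "1 - complex_of_real (1/3) = complex_of_real (2/3)" by simp
  then have "complex_of_real (Gamma (1/3) * Gamma (2/3))
      = Gamma (complex_of_real (1/3)) * Gamma (1 - complex_of_real (1/3))"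
    by (simp only: of_real_mult Gamma_complex_of_real)
  also have "\<dots> = of_real pi / sin (of_real pi * complex_of_real (1/3))"
    by (rule Gamma_reflection_complex)
  also have "\<dots> = complex_of_real (pi / sin (pi/3))"
    by (simp only: sin_of_real flip: of_real_mult of_real_divide) simp
  finally have "Gamma (1/3::real) * Gamma (2/3) = pi / sin (pi/3)"
    by (simp only: of_real_eq_iff)
  then show ?thesis by (simp add: sin_60)
qed

lemma airy_c1_eq_Gamma: "sqrt 3 / 2 * 3 powr (-2/3) * Gamma (1/3) = pi * airy_c1"
  and airy_c2_eq_Gamma: "sqrt 3 / 2 * 3 powr (-1/3) * Gamma (2/3) = pi * airy_c2"
proof -
  have pos: "Gamma (2/3::real) > 0" by simp
  then have "Gamma (1/3::real) = Gamma (1/3) * Gamma (2/3) / Gamma (2/3)"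
    by (metis less_irrefl nonzero_mult_div_cancel_right)
  also have "\<dots> = 2 * pi / (sqrt 3 * Gamma (2/3))"
    unfolding Gamma_one_third_mult_Gamma_two_thirds by simp
  finally have Gamma_one_third: "Gamma (1/3::real) = 2 * pi / (sqrt 3 * Gamma (2/3))" .
  show "sqrt 3 / 2 * 3 powr (-2/3) * Gamma (1/3) = pi * airy_c1"
    unfolding airy_c1_def Gamma_one_third using pos by (simp add: powr_minus field_simps)
  show "sqrt 3 / 2 * 3 powr (-1/3) * Gamma (2/3) = pi * airy_c2"
    unfolding airy_c2_def Gamma_one_third using pos by (simp add: powr_minus field_simps)
qed

definition \<omega> :: complex where "\<omega> = Complex (1/2) (sqrt 3 / 2)"

lemma minus_\<omega>_cube: "(- \<omega>) ^ 3 = 1"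
  by (simp add: \<omega>_def complex_eq_iff power3_eq_cube power2_eq_square algebra_simps)

lemma norm_\<omega>: "norm \<omega> = 1"
  by (simp add: \<omega>_def cmod_def power2_eq_square)

definition airy_sign :: "nat \<Rightarrow> real" where "airy_sign n = Im (\<omega> * (- \<omega>) ^ n)"

lemma airy_sign_mod_3:
  "airy_sign (3*k) = sqrt 3 / 2" "airy_sign (3*k+1) = - sqrt 3 / 2" "airy_sign (3*k+2) = 0"
proof -
  have cube: "(- \<omega>) ^ (3*k) = 1" by (simp add: power_mult minus_\<omega>_cube)
  then have "(- \<omega>) ^ (3*k+1) = - \<omega>" "(- \<omega>) ^ (3*k+2) = \<omega> * \<omega>"
    by (simp_all add: power_add power2_eq_square)
  with cube show "airy_sign (3*k) = sqrt 3 / 2" "airy_sign (3*k+1) = - sqrt 3 / 2" "airy_sign (3*k+2) = 0"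
    unfolding airy_sign_def by (simp_all add: \<omega>_def)
qed

lemma abs_airy_sign_le: "\<bar>airy_sign n\<bar> \<le> 1"
proof -
  have "\<bar>airy_sign n\<bar> \<le> cmod (\<omega> * (- \<omega>) ^ n)" unfolding airy_sign_def by (rule abs_Im_le_cmod)
  also have "\<dots> = 1" by (simp add: norm_mult norm_power norm_\<omega>)
  finally show ?thesis .
qed

lemma Gamma_add_of_nat: "(a::real) > 0 \<Longrightarrow> Gamma (a + real k) = pochhammer a k * Gamma a"
proof -
  assume a: "a > 0"
  then have "a \<notin> \<int>\<^sub>\<le>\<^sub>0" using nonpos_Ints_nonpos by force
  then have "pochhammer a k = Gamma (a + real k) / Gamma a" by (rule pochhammer_Gamma)
  then show ?thesis using Gamma_real_pos[OF a] by simp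
qed

text \<open>By the Gamma integral, this is the integral of the n-th term of the exponential series
  of airy_integrand below.\<close>

definition airy_term_integral :: "real \<Rightarrow> nat \<Rightarrow> real" where
  "airy_term_integral x n =
     airy_sign n * x ^ n / fact n * 3 powr ((real n - 2) / 3) * Gamma ((real n + 1) / 3)"

lemma airy_term_integral_eq:
  "airy_term_integral x n = pi * ((airy_c1 * airy_f_coeff n - airy_c2 * airy_g_coeff n) * x ^ n)"
proof -
  obtain k r where n: "n = 3*k + r" and r: "r < 3"
    by (metis div_mult_mod_eq mod_less_divisor zero_less_numeral mult.commute)
  consider "r = 0" | "r = 1" | "r = 2" using r by linarith
  then show ?thesis
  proof cases
    case 1
    have pow: "3 powr ((real n - 2) / 3) = 3^k * 3 powr (-2/3)"
      using n 1 by (simp add: powr_add[symmetric] powr_realpow[symmetric] field_simps)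
    have Gamma: "Gamma ((real n + 1) / 3) = pochhammer (1/3) k * Gamma (1/3)"
      using Gamma_add_of_nat[of "1/3" k] n 1 by (simp add: field_simps)
    have coeff: "airy_f_coeff n = 3^k * pochhammer (1/3) k / fact n" "airy_g_coeff n = 0"
      using n 1 by (simp_all add: airy_f_coeff_def airy_g_coeff_def)
    have sign: "airy_sign n = sqrt 3 / 2" using airy_sign_mod_3(1)[of k] n 1 by simp
    have "airy_sign n * x ^ n / fact n * 3 powr ((real n - 2) / 3) * Gamma ((real n + 1) / 3)
        = (sqrt 3 / 2 * 3 powr (-2/3) * Gamma (1/3)) * (3^k * pochhammer (1/3) k / fact n * x^n)"
      unfolding pow Gamma sign by (simp add: algebra_simps)
    then show ?thesis unfolding airy_term_integral_def airy_c1_eq_Gamma coeff by (simp add: algebra_simps)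
  next
    case 2
    have pow: "3 powr ((real n - 2) / 3) = 3^k * 3 powr (-1/3)"
      using n 2 by (simp add: powr_add[symmetric] powr_realpow[symmetric] field_simps)
    have Gamma: "Gamma ((real n + 1) / 3) = pochhammer (2/3) k * Gamma (2/3)"
      using Gamma_add_of_nat[of "2/3" k] n 2 by (simp add: field_simps)
    have "Suc (3*k) div 3 = k" "Suc (3*k) mod 3 = 1" by presburger+
    then have coeff: "airy_g_coeff n = 3^k * pochhammer (2/3) k / fact n" "airy_f_coeff n = 0"
      using n 2 by (simp_all add: airy_f_coeff_def airy_g_coeff_def)
    have sign: "airy_sign n = - sqrt 3 / 2" using airy_sign_mod_3(2)[of k] n 2 by simp
    have "airy_sign n * x ^ n / fact n * 3 powr ((real n - 2) / 3) * Gamma ((real n + 1) / 3)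
        = - (sqrt 3 / 2 * 3 powr (-1/3) * Gamma (2/3)) * (3^k * pochhammer (2/3) k / fact n * x^n)"
      unfolding pow Gamma sign by (simp add: algebra_simps)
    then show ?thesis unfolding airy_term_integral_def airy_c2_eq_Gamma coeff by (simp add: algebra_simps)
  next
    case 3
    have "Suc (Suc (3*k)) mod 3 = 2" by presburger
    then have "airy_g_coeff n = 0" "airy_f_coeff n = 0"
      using n 3 by (simp_all add: airy_f_coeff_def airy_g_coeff_def)
    moreover have "airy_sign n = 0" using airy_sign_mod_3(3)[of k] n 3 by simp
    ultimately show ?thesis by (simp add: airy_term_integral_def)
  qed
qed

text \<open>Under s = t^3/3, i.e. t = airy_t s, the measure airy_weight s ds becomes exp(-t^3/3) dt.\<close>

definition airy_t :: "real \<Rightarrow> real" where "airy_t s = (3 * s) powr (1/3)"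

definition airy_weight :: "real \<Rightarrow> real" where "airy_weight s = exp (- s) * (3 * s) powr (-2/3)"

definition airy_integrand :: "real \<Rightarrow> real \<Rightarrow> real" where
  "airy_integrand x s = airy_weight s * Im (\<omega> * exp (- \<omega> * of_real (x * airy_t s)))"

definition airy_term :: "real \<Rightarrow> nat \<Rightarrow> real \<Rightarrow> real" where
  "airy_term x n s = airy_sign n * x ^ n / fact n * (airy_weight s * airy_t s ^ n)"

definition airy_majorant :: "real \<Rightarrow> real \<Rightarrow> real" where
  "airy_majorant x s =
     exp (\<bar>x\<bar> * (6 * \<bar>x\<bar> + 1)) * (if s \<in> {0..1} then s powr (-2/3) else exp (-s/2))"

lemma airy_t_nonneg: "airy_t s \<ge> 0"
  by (simp add: airy_t_def)

lemma airy_weight_nonneg: "airy_weight s \<ge> 0"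
  by (simp add: airy_weight_def)

lemma airy_weight_mult_airy_t_power: assumes "s \<ge> 0"
  shows "airy_weight s * airy_t s ^ n = 3 powr ((real n - 2) / 3) * (s powr ((real n + 1) / 3 - 1) / exp s)"
proof (cases "s = 0")
  case True then show ?thesis by (simp add: airy_weight_def)
next
  case False
  then have s: "s > 0" using assms by simp
  have "airy_t s ^ n = (3 * s) powr (real n * (1/3))" unfolding airy_t_def using s by (simp add: powr_power)
  then have "airy_weight s * airy_t s ^ n = exp (- s) * ((3 * s) powr (-2/3) * (3 * s) powr (real n * (1/3)))"
    unfolding airy_weight_def by simp
  also have "(3 * s) powr (-2/3) * (3 * s) powr (real n * (1/3)) = (3 * s) powr ((real n - 2) / 3)"
    by (simp add: powr_add[symmetric] field_simps)
  also have "\<dots> = 3 powr ((real n - 2) / 3) * s powr ((real n + 1) / 3 - 1)"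
    by (simp add: powr_mult field_simps)
  finally show ?thesis by (simp add: exp_minus field_simps)
qed

lemma has_integral_airy_term: "(airy_term x n has_integral airy_term_integral x n) {0..}"
proof -
  have g: "((\<lambda>s. s powr ((real n + 1) / 3 - 1) / exp s) has_integral Gamma ((real n + 1) / 3)) {0..}"
    by (rule Gamma_integral_real) simp
  have "((\<lambda>s. (airy_sign n * x ^ n / fact n * 3 powr ((real n - 2) / 3)) * (s powr ((real n + 1) / 3 - 1) / exp s))
      has_integral (airy_sign n * x ^ n / fact n * 3 powr ((real n - 2) / 3)) * Gamma ((real n + 1) / 3)) {0..}"
    by (rule has_integral_mult_right[OF g])
  then show ?thesis unfolding airy_term_integral_def
    by (rule has_integral_eq[rotated]) (simp add: airy_term_def airy_weight_mult_airy_t_power)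
qed

lemma Im_mult_complex_of_real: "Im (z * complex_of_real r) = Im z * r"
  by simp

lemma sums_airy_term: "(\<lambda>n. airy_term x n s) sums airy_integrand x s"
proof -
  define z where "z = - \<omega> * of_real (x * airy_t s)"
  have "(\<lambda>n. \<omega> * (z ^ n /\<^sub>R fact n)) sums (\<omega> * exp z)"
    by (rule sums_mult[OF exp_converges])
  then have "(\<lambda>n. Im (\<omega> * (z ^ n /\<^sub>R fact n))) sums Im (\<omega> * exp z)"
    by (simp add: sums_complex_iff)
  then have "(\<lambda>n. airy_weight s * Im (\<omega> * (z ^ n /\<^sub>R fact n))) sums (airy_weight s * Im (\<omega> * exp z))"
    by (rule sums_mult)
  moreover have "airy_weight s * Im (\<omega> * (z ^ n /\<^sub>R fact n)) = airy_term x n s" for n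
  proof -
    have z': "z = (- \<omega>) * of_real (x * airy_t s)" by (simp add: z_def)
    have zn: "z ^ n = (- \<omega>) ^ n * of_real ((x * airy_t s) ^ n)"
      unfolding z' by (simp only: power_mult_distrib[of "- \<omega>"] of_real_power)
    have "\<omega> * (z ^ n /\<^sub>R fact n) = (\<omega> * (- \<omega>) ^ n) * of_real ((x * airy_t s) ^ n / fact n)"
      unfolding zn by (simp add: scaleR_conv_of_real field_simps)
    then have "Im (\<omega> * (z ^ n /\<^sub>R fact n)) = Im ((\<omega> * (- \<omega>) ^ n) * of_real ((x * airy_t s) ^ n / fact n))"
      by (rule arg_cong)
    also have "\<dots> = airy_sign n * ((x * airy_t s) ^ n / fact n)" unfolding airy_sign_def by (rule Im_mult_complex_of_real)
    finally have "Im (\<omega> * (z ^ n /\<^sub>R fact n)) = airy_sign n * ((x * airy_t s) ^ n / fact n)" .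
    then show ?thesis unfolding airy_term_def by (simp add: power_mult_distrib field_simps)
  qed
  ultimately show ?thesis unfolding airy_integrand_def z_def by simp
qed

lemma sum_power_div_fact_le_exp:
  fixes y :: real
  assumes "y \<ge> 0"
  shows "(\<Sum>n<N. y ^ n / fact n) \<le> exp y"
proof -
  have "(\<lambda>n. y ^ n / fact n) sums exp y"
    using exp_converges[of y] by (simp add: divide_inverse mult.commute)
  moreover from this have "(\<Sum>n<N. y ^ n / fact n) \<le> (\<Sum>n. y ^ n / fact n)"
    using assms by (intro sum_le_suminf sums_summable) auto
  ultimately show ?thesis by (simp add: sums_iff)
qed

lemma abs_sum_airy_term_le: "\<bar>\<Sum>n<N. airy_term x n s\<bar> \<le> airy_weight s * exp (\<bar>x\<bar> * airy_t s)"
proof -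
  define y where "y = \<bar>x\<bar> * airy_t s"
  have "y \<ge> 0" unfolding y_def using airy_t_nonneg[of s] by simp
  have term_le: "\<bar>airy_term x n s\<bar> \<le> airy_weight s * (y ^ n / fact n)" for n
  proof -
    have "\<bar>airy_term x n s\<bar> = \<bar>airy_sign n\<bar> * (airy_weight s * (y ^ n / fact n))"
      unfolding airy_term_def y_def using airy_t_nonneg[of s] airy_weight_nonneg[of s]
      by (simp add: abs_mult power_abs power_mult_distrib field_simps)
    also have "\<dots> \<le> 1 * (airy_weight s * (y ^ n / fact n))"
      using abs_airy_sign_le[of n] \<open>y \<ge> 0\<close> airy_weight_nonneg[of s] by (intro mult_right_mono) auto
    finally show ?thesis by simp
  qed
  have "\<bar>\<Sum>n<N. airy_term x n s\<bar> \<le> (\<Sum>n<N. \<bar>airy_term x n s\<bar>)" by (rule sum_abs)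
  also have "\<dots> \<le> (\<Sum>n<N. airy_weight s * (y ^ n / fact n))" by (rule sum_mono[OF term_le])
  also have "\<dots> = airy_weight s * (\<Sum>n<N. y ^ n / fact n)" by (simp add: sum_distrib_left)
  also have "\<dots> \<le> airy_weight s * exp y"
    using sum_power_div_fact_le_exp[OF \<open>y \<ge> 0\<close>] airy_weight_nonneg[of s] by (rule mult_left_mono)
  finally show ?thesis unfolding y_def .
qed

lemma integrable_airy_majorant: "airy_majorant x integrable_on {0..}"
proof -
  have "(\<lambda>s::real. if s \<in> {0..1} then s powr (-2/3) else exp (-s/2)) integrable_on {0..}"
    using integrable_Gamma_integral_bound[of "-2/3" 1] by simp
  from integrable_on_cmult_left[OF this, of "exp (\<bar>x\<bar> * (6 * \<bar>x\<bar> + 1))"]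
  show ?thesis unfolding airy_majorant_def by simp
qed

lemma airy_t_cube:
  assumes "s \<ge> 0"
  shows "airy_t s ^ 3 = 3 * s"
proof (cases "s = 0")
  case False
  with assms show ?thesis unfolding airy_t_def by (simp add: powr_power)
qed (simp add: airy_t_def)

lemma mult_le_cube_div_6:
  fixes a v :: real
  assumes "a \<ge> 0" "v \<ge> 0"
  shows "a * v \<le> v ^ 3 / 6 + a * (6 * a + 1)"
proof (cases "v \<ge> 6 * a + 1")
  case True
  then have "v * v \<ge> v * 1" using assms by (intro mult_left_mono) auto
  with True have "v * v \<ge> 6 * a" by linarith
  then have "v * (v * v) \<ge> v * (6 * a)" using assms by (intro mult_left_mono) auto
  then have "a * v \<le> v ^ 3 / 6" by (simp add: power3_eq_cube algebra_simps)
  moreover have "a * (6 * a + 1) \<ge> 0" using assms by simp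
  ultimately show ?thesis by linarith
next
  case False
  then have "a * v \<le> a * (6 * a + 1)" using assms by (intro mult_left_mono) auto
  moreover have "v ^ 3 \<ge> 0" using assms by simp
  ultimately show ?thesis by linarith
qed

lemma three_mult_powr_le:
  fixes s :: real
  assumes "s > 0"
  shows "(3 * s) powr (-2/3) \<le> (if s \<le> 1 then s powr (-2/3) else 1)"
proof (cases "s \<le> 1")
  case True
  have "3 powr (-2/3) \<le> (1::real)"
    using ge_one_powr_ge_zero[of 3 "2/3"] by (simp add: powr_minus_divide)
  then show ?thesis
    using True mult_right_mono[of "3 powr (-2/3)" 1 "s powr (-2/3)"] by (simp add: powr_mult)
next
  case False
  then have "1 \<le> (3 * s) powr (2/3)" by (intro ge_one_powr_ge_zero) auto
  then show ?thesis using False by (simp add: powr_minus_divide divide_le_eq_1)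
qed

lemma airy_weight_mult_exp_le_majorant:
  assumes "s \<ge> 0"
  shows "airy_weight s * exp (\<bar>x\<bar> * airy_t s) \<le> airy_majorant x s"
proof (cases "s = 0")
  case True
  then show ?thesis by (simp add: airy_weight_def airy_majorant_def)
next
  case False
  with assms have "s > 0" by simp
  define K where "K = \<bar>x\<bar> * (6 * \<bar>x\<bar> + 1)"
  have "\<bar>x\<bar> * airy_t s \<le> s / 2 + K"
    using mult_le_cube_div_6[of "\<bar>x\<bar>" "airy_t s"] airy_t_cube[OF assms] airy_t_nonneg[of s]
    unfolding K_def by simp
  then have exp_le: "exp (- s) * exp (\<bar>x\<bar> * airy_t s) \<le> exp K * exp (- s / 2)"
    by (simp add: mult_exp_exp)
  have "airy_weight s * exp (\<bar>x\<bar> * airy_t s)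
      = (3 * s) powr (-2/3) * (exp (- s) * exp (\<bar>x\<bar> * airy_t s))"
    unfolding airy_weight_def by simp
  also have "\<dots> \<le> (if s \<le> 1 then s powr (-2/3) else 1) * (exp K * exp (- s / 2))"
    by (rule mult_mono[OF three_mult_powr_le[OF \<open>s > 0\<close>] exp_le]) auto
  also have "\<dots> \<le> airy_majorant x s"
    using \<open>s > 0\<close> unfolding airy_majorant_def K_def by (auto simp: mult_left_le)
  finally show ?thesis .
qed

lemma sums_Ai: "(\<lambda>n. (airy_c1 * airy_f_coeff n - airy_c2 * airy_g_coeff n) * x ^ n) sums Ai x"
proof -
  have "(\<lambda>n. airy_c1 * (airy_f_coeff n * x ^ n) - airy_c2 * (airy_g_coeff n * x ^ n))
      sums (airy_c1 * power_series airy_f_coeff x - airy_c2 * power_series airy_g_coeff x)"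
    unfolding power_series_def
    by (intro sums_diff sums_mult summable_sums summable_airy_recurrence
        airy_f_coeff_recurrence airy_g_coeff_recurrence)
  then show ?thesis unfolding Ai_eq_power_series by (simp add: algebra_simps)
qed

lemma has_integral_airy_integrand: "(airy_integrand x has_integral pi * Ai x) {0..}"
proof (rule has_integral_dominated_convergence[where f = "\<lambda>N s. \<Sum>n<N. airy_term x n s"
      and h = "airy_majorant x" and y = "\<lambda>N. \<Sum>n<N. airy_term_integral x n"])
  fix N
  show "((\<lambda>s. \<Sum>n<N. airy_term x n s) has_integral (\<Sum>n<N. airy_term_integral x n)) {0..}"
    by (intro has_integral_sum has_integral_airy_term) auto
  show "\<forall>s\<in>{0..}. norm (\<Sum>n<N. airy_term x n s) \<le> airy_majorant x s"
    using order_trans[OF abs_sum_airy_term_le airy_weight_mult_exp_le_majorant] by auto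
next
  show "airy_majorant x integrable_on {0..}" by (rule integrable_airy_majorant)
  show "\<forall>s\<in>{0..}. (\<lambda>N. \<Sum>n<N. airy_term x n s) \<longlonglongrightarrow> airy_integrand x s"
    using sums_airy_term by (simp add: sums_def)
  have "(\<lambda>n. airy_term_integral x n) sums (pi * Ai x)"
    unfolding airy_term_integral_eq by (rule sums_mult[OF sums_Ai])
  then show "(\<lambda>N. \<Sum>n<N. airy_term_integral x n) \<longlonglongrightarrow> pi * Ai x"
    by (simp add: sums_def)
qed

lemma has_integral_airy_weight: "(airy_weight has_integral 3 powr (-2/3) * Gamma (1/3)) {0..}"
proof -
  have "((\<lambda>s::real. s powr (1/3 - 1) / exp s) has_integral Gamma (1/3)) {0..}"
    by (rule Gamma_integral_real) simp
  then have "((\<lambda>s::real. 3 powr (-2/3) * (s powr (1/3 - 1) / exp s)) has_integral 3 powr (-2/3) * Gamma (1/3)) {0..}"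
    by (rule has_integral_mult_right)
  then show ?thesis
    by (rule has_integral_eq[rotated]) (use airy_weight_mult_airy_t_power[of _ 0] in simp)
qed

lemma abs_airy_integrand_le:
  assumes "x \<ge> 0"
  shows "\<bar>airy_integrand x s\<bar> \<le> airy_weight s"
proof -
  have "\<bar>Im (\<omega> * exp (- \<omega> * of_real (x * airy_t s)))\<bar> \<le> cmod (\<omega> * exp (- \<omega> * of_real (x * airy_t s)))"
    by (rule abs_Im_le_cmod)
  also have "\<dots> = exp (Re (- \<omega> * of_real (x * airy_t s)))" by (simp add: norm_mult norm_\<omega>)
  also have "\<dots> = exp (- (x * airy_t s) / 2)" by (simp add: \<omega>_def)
  also have "\<dots> \<le> 1" using mult_nonneg_nonneg[OF assms airy_t_nonneg[of s]] by simp
  finally show ?thesis unfolding airy_integrand_def using airy_weight_nonneg[of s]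
    by (simp add: abs_mult) (metis mult_left_mono mult.right_neutral)
qed

lemma abs_Ai_le:
  assumes "x \<ge> 0"
  shows "\<bar>Ai x\<bar> \<le> 3 powr (-2/3) * Gamma (1/3) / pi"
proof -
  have "norm (integral {0..} (airy_integrand x)) \<le> integral {0..} airy_weight"
    using has_integral_airy_integrand has_integral_airy_weight abs_airy_integrand_le[OF assms]
    by (intro integral_norm_bound_integral) (auto simp: has_integral_integrable)
  then have "\<bar>pi * Ai x\<bar> \<le> 3 powr (-2/3) * Gamma (1/3)"
    using integral_unique[OF has_integral_airy_integrand] integral_unique[OF has_integral_airy_weight]
    by simp
  then show ?thesis by (simp add: abs_mult field_simps)
qed

section \<open>Ai on the positive half-line\<close>

lemma Ai_mult_Ai'_strict_mono:
  assumes "0 \<le> a" "a < b"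
  shows "Ai a * Ai' a < Ai b * Ai' b"
proof (rule DERIV_pos_imp_increasing_open[OF \<open>a < b\<close>])
  fix x assume "a < x" "x < b"
  have "\<not> (Ai x = 0 \<and> Ai' x = 0)" using Ai_Bi_wronskian_pos[of x] by auto
  then have "(Ai' x)^2 + x * (Ai x)^2 > 0"
    using \<open>0 \<le> a\<close> \<open>a < x\<close> by (auto intro: add_pos_nonneg add_nonneg_pos)
  moreover have "((\<lambda>x. Ai x * Ai' x) has_real_derivative (Ai' x)^2 + x * (Ai x)^2) (at x)"
    by (auto intro!: derivative_eq_intros simp: power2_eq_square algebra_simps)
  ultimately show "\<exists>y. ((\<lambda>x. Ai x * Ai' x) has_real_derivative y) (at x) \<and> y > 0" by blast
next
  show "continuous_on {a..b} (\<lambda>x. Ai x * Ai' x)"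
    by (rule DERIV_continuous_on) (auto intro!: derivative_eq_intros)
qed

text \<open>If Ai Ai' were positive somewhere on [0,\<infinity>), it would stay above that value, and
  Ai^2, whose derivative is 2 Ai Ai', would grow linearly, contradicting boundedness.\<close>

lemma Ai_mult_Ai'_nonpos:
  assumes "x \<ge> 0"
  shows "Ai x * Ai' x \<le> 0"
proof (rule ccontr)
  define B where "B = 3 powr (-2/3) * Gamma (1/3) / pi"
  define Q where "Q = Ai x * Ai' x"
  assume "\<not> Ai x * Ai' x \<le> 0"
  then have Q: "Q > 0" unfolding Q_def by simp
  define s where "s = x + B^2 / (2 * Q) + 1"
  have "x < s" using Q unfolding s_def by (simp add: add_nonneg_pos)
  have "((\<lambda>y. (Ai y)^2) has_real_derivative 2 * (Ai y * Ai' y)) (at y)" for y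
    by (auto intro!: derivative_eq_intros simp: power2_eq_square algebra_simps)
  then obtain z where z: "x < z" "z < s" "(Ai s)^2 - (Ai x)^2 = (s - x) * (2 * (Ai z * Ai' z))"
    using MVT2[OF \<open>x < s\<close>, of "\<lambda>y. (Ai y)^2" "\<lambda>y. 2 * (Ai y * Ai' y)"] by auto
  have "(s - x) * (2 * Q) \<le> (s - x) * (2 * (Ai z * Ai' z))"
    using Ai_mult_Ai'_strict_mono[of x z] z assms \<open>x < s\<close> unfolding Q_def by simp
  moreover have "(s - x) * (2 * Q) = B^2 + 2 * Q" using Q unfolding s_def by (simp add: field_simps)
  ultimately have "(Ai s)^2 \<ge> B^2 + 2 * Q" using z(3) zero_le_power2[of "Ai x"] by linarith
  moreover have "\<bar>Ai s\<bar> \<le> B" unfolding B_def using abs_Ai_le[of s] \<open>x < s\<close> assms by simp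
  then have "\<bar>Ai s\<bar>^2 \<le> B^2" by (intro power_mono) auto
  then have "(Ai s)^2 \<le> B^2" by simp
  ultimately show False using Q by simp
qed

lemma Ai_mult_Ai'_neg: "x \<ge> 0 \<Longrightarrow> Ai x * Ai' x < 0"
  using Ai_mult_Ai'_strict_mono[of x "x+1"] Ai_mult_Ai'_nonpos[of "x+1"] by simp

lemma Ai_pos:
  assumes "x \<ge> 0"
  shows "Ai x > 0"
proof (rule ccontr)
  assume "\<not> Ai x > 0"
  moreover have "Ai 0 > 0" using Ai_0 airy_c1_pos by simp
  ultimately obtain z where "0 \<le> z" "z \<le> x" "Ai z = 0"
    using IVT2[of Ai x 0 0] assms DERIV_isCont[OF DERIV_Ai] by force
  then show False using Ai_mult_Ai'_neg[of z] by simp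
qed

lemma Ai'_neg: "x \<ge> 0 \<Longrightarrow> Ai' x < 0"
  using Ai_mult_Ai'_neg[of x] Ai_pos[of x] by (simp add: mult_less_0_iff)

text \<open>Solutions of the Riccati equation r' = x - r^2 that satisfy r^2 < x eventually
  increase at rate at least 1, so they cannot stay negative.\<close>

lemma riccati_solution_not_negative:
  fixes r :: "real \<Rightarrow> real"
  assumes "t \<ge> 0"
    and deriv: "\<And>x. x \<ge> t \<Longrightarrow> (r has_real_derivative x - (r x)^2) (at x)"
    and sq_less: "\<And>x. x > t \<Longrightarrow> (r x)^2 < x"
    and neg: "\<And>x. x \<ge> t \<Longrightarrow> r x < 0"
  shows False
proof -
  define \<rho> where "\<rho> = - r t"
  have "\<rho> > 0" using neg[of t] unfolding \<rho>_def by simp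
  have ge: "r x \<ge> - \<rho>" if "x \<ge> t" for x
  proof (cases "x = t")
    case False
    with that have "t < x" by simp
    then obtain z where z: "t < z" "z < x" "r x - r t = (x - t) * (z - (r z)^2)"
      using MVT2[of t x r "\<lambda>y. y - (r y)^2"] deriv by force
    then have "(x - t) * (z - (r z)^2) \<ge> 0" using sq_less[of z] by simp
    then show ?thesis using z unfolding \<rho>_def by simp
  qed (simp add: \<rho>_def)
  have sq_le: "(r x)^2 \<le> \<rho>^2" if "x \<ge> t" for x
  proof -
    have "\<bar>r x\<bar> \<le> \<bar>\<rho>\<bar>" using ge[OF that] neg[OF that] \<open>\<rho> > 0\<close> by simp
    then show ?thesis by (simp add: abs_le_square_iff)
  qed
  define T where "T = t + \<rho>^2 + 1"
  define S where "S = T + \<rho> + 1"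
  have "T < S" "t \<le> T" using \<open>\<rho> > 0\<close> unfolding S_def T_def by simp_all
  then obtain z where z: "T < z" "z < S" "r S - r T = (S - T) * (z - (r z)^2)"
    using MVT2[of T S r "\<lambda>y. y - (r y)^2"] deriv by force
  have "z - (r z)^2 \<ge> 1" using sq_le[of z] z(1) \<open>t \<ge> 0\<close> \<open>t \<le> T\<close> unfolding T_def by linarith
  then have "r S - r T \<ge> S - T" using z(3) \<open>T < S\<close> mult_left_mono[of 1 "z - (r z)^2" "S - T"] by simp
  then have "r S \<ge> 1" using ge[of T] \<open>t \<le> T\<close> unfolding S_def by simp
  then show False using neg[of S] \<open>t \<le> T\<close> \<open>T < S\<close> by simp
qed

lemma Ai'_sq_gt:
  assumes "t > 0"
  shows "t * (Ai t)^2 < (Ai' t)^2"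
proof (rule ccontr)
  define E where "E x = (Ai' x)^2 - x * (Ai x)^2" for x
  assume "\<not> t * (Ai t)^2 < (Ai' t)^2"
  then have "E t \<le> 0" unfolding E_def by simp
  have E_neg: "E x < 0" if "x > t" for x
  proof -
    have "E x < E t"
    proof (rule DERIV_neg_imp_decreasing[OF that])
      fix y assume "t \<le> y"
      then have "- ((Ai y)^2) < 0" using Ai_pos[of y] assms by simp
      moreover have "(E has_real_derivative - ((Ai y)^2)) (at y)"
        unfolding E_def [abs_def] by (auto intro!: derivative_eq_intros simp: power2_eq_square algebra_simps)
      ultimately show "\<exists>d. (E has_real_derivative d) (at y) \<and> d < 0" by blast
    qed
    then show ?thesis using \<open>E t \<le> 0\<close> by simp
  qed
  show False
  proof (rule riccati_solution_not_negative[where r = "\<lambda>x. Ai' x / Ai x" and t = t])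
    fix x assume "x \<ge> t"
    then have pos: "Ai x > 0" using Ai_pos assms by simp
    have "((\<lambda>x. Ai' x / Ai x) has_real_derivative (x * Ai x * Ai x - Ai' x * Ai' x) / (Ai x * Ai x)) (at x)"
      using pos by (auto intro!: derivative_eq_intros simp: algebra_simps)
    moreover have "(x * Ai x * Ai x - Ai' x * Ai' x) / (Ai x * Ai x) = x - (Ai' x / Ai x)^2"
      using pos by (simp add: field_simps power2_eq_square)
    ultimately show "((\<lambda>x. Ai' x / Ai x) has_real_derivative x - (Ai' x / Ai x)^2) (at x)"
      by simp
    show "Ai' x / Ai x < 0" using pos Ai'_neg[of x] assms \<open>x \<ge> t\<close> by (simp add: divide_neg_pos)
  next
    fix x assume "x > t"
    then have "(Ai x)^2 > 0" "(Ai' x)^2 < x * (Ai x)^2" using Ai_pos[of x] assms E_neg unfolding E_def by simp_all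
    then show "(Ai' x / Ai x)^2 < x" by (simp add: power_divide divide_less_eq)
  qed (use assms in simp)
qed

lemma mult_Ai_add_Ai'_neg:
  assumes "\<mu> \<ge> 0" "\<mu>\<^sup>2 \<le> t"
  shows "\<mu> * Ai t + Ai' t < 0"
proof (cases "t = 0")
  case True
  then show ?thesis using assms Ai'_0 airy_c2_pos by simp
next
  case False
  then have "t > 0" using assms zero_le_power2[of \<mu>] by linarith
  have "(sqrt t * Ai t)^2 = t * (Ai t)^2" using \<open>t > 0\<close> by (simp add: power_mult_distrib)
  then have "(sqrt t * Ai t)^2 < (- Ai' t)^2" using Ai'_sq_gt[OF \<open>t > 0\<close>] by simp
  moreover have "0 \<le> - Ai' t" using Ai'_neg[of t] \<open>t > 0\<close> by simp
  ultimately have "sqrt t * Ai t < - Ai' t" by (rule power2_less_imp_less)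
  moreover have "\<mu> * Ai t \<le> sqrt t * Ai t"
    using real_le_rsqrt[OF assms(2)] Ai_pos[of t] \<open>t > 0\<close> by (intro mult_right_mono) auto
  ultimately show ?thesis by simp
qed

section \<open>Monotonicity of the two combinations\<close>

lemma exp_mult_Ai_strict_antimono:
  assumes "\<mu> \<ge> 0" "0 \<le> x" "x < y"
  shows "exp (\<mu> * y) * Ai (\<mu>\<^sup>2 + y) < exp (\<mu> * x) * Ai (\<mu>\<^sup>2 + x)"
proof (rule DERIV_neg_imp_decreasing[OF \<open>x < y\<close>])
  fix z assume "x \<le> z"
  then have "exp (\<mu> * z) * (\<mu> * Ai (\<mu>\<^sup>2 + z) + Ai' (\<mu>\<^sup>2 + z)) < 0"
    using mult_Ai_add_Ai'_neg[of \<mu> "\<mu>\<^sup>2 + z"] assms by (simp add: mult_pos_neg)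
  moreover have "((\<lambda>z. exp (\<mu> * z) * Ai (\<mu>\<^sup>2 + z)) has_real_derivative
      exp (\<mu> * z) * (\<mu> * Ai (\<mu>\<^sup>2 + z) + Ai' (\<mu>\<^sup>2 + z))) (at z)"
    by (auto intro!: derivative_eq_intros simp: algebra_simps)
  ultimately show "\<exists>d. ((\<lambda>z. exp (\<mu> * z) * Ai (\<mu>\<^sup>2 + z)) has_real_derivative d) (at z) \<and> d < 0"
    by blast
qed

lemma airy_quotient_strict_antimono:
  assumes "\<mu> \<ge> 0" "\<mu>\<^sup>2 \<le> s" "s < t"
  shows "(\<mu> * Bi t + Bi' t) / (\<mu> * Ai t + Ai' t) < (\<mu> * Bi s + Bi' s) / (\<mu> * Ai s + Ai' s)"
proof -
  define a where "a x = \<mu> * Ai x + Ai' x" for x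
  define b where "b x = \<mu> * Bi x + Bi' x" for x
  have deriv: "((\<lambda>x. b x / a x) has_real_derivative (\<mu>\<^sup>2 - x) * (Ai x * Bi' x - Ai' x * Bi x) / (a x)^2) (at x)"
    if "\<mu>\<^sup>2 \<le> x" for x
  proof -
    have "a x \<noteq> 0" using mult_Ai_add_Ai'_neg[OF assms(1) that] unfolding a_def by simp
    then have "((\<lambda>x. b x / a x) has_real_derivative
        ((\<mu> * Bi' x + x * Bi x) * a x - b x * (\<mu> * Ai' x + x * Ai x)) / (a x * a x)) (at x)"
      unfolding a_def b_def by (auto intro!: derivative_eq_intros simp: algebra_simps)
    moreover have "(\<mu> * Bi' x + x * Bi x) * a x - b x * (\<mu> * Ai' x + x * Ai x)
        = (\<mu>\<^sup>2 - x) * (Ai x * Bi' x - Ai' x * Bi x)"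
      unfolding a_def b_def by (simp add: algebra_simps power2_eq_square)
    ultimately show ?thesis by (simp add: power2_eq_square)
  qed
  have "b t / a t < b s / a s"
  proof (rule DERIV_neg_imp_decreasing_open[OF \<open>s < t\<close>])
    fix x assume "s < x" "x < t"
    then have "a x \<noteq> 0" "\<mu>\<^sup>2 < x"
      using mult_Ai_add_Ai'_neg[OF assms(1), of x] assms unfolding a_def by auto
    then have "(\<mu>\<^sup>2 - x) * (Ai x * Bi' x - Ai' x * Bi x) / (a x)^2 < 0"
      using Ai_Bi_wronskian_pos[of x] by (simp add: mult_neg_pos divide_neg_pos)
    then show "\<exists>d. ((\<lambda>x. b x / a x) has_real_derivative d) (at x) \<and> d < 0"
      using deriv[of x] \<open>\<mu>\<^sup>2 < x\<close> by auto
  next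
    show "continuous_on {s..t} (\<lambda>x. b x / a x)"
      using deriv assms(2) by (intro DERIV_atLeastAtMost_imp_continuous_on) (blast intro: order_trans)
  qed
  then show ?thesis unfolding a_def b_def .
qed

lemma exp_mult_airy_combination_strict_mono:
  fixes \<mu> C :: real
  assumes "\<mu> \<ge> 0" "0 \<le> x" "x < y"
    and C: "C = - (\<mu> * Bi (\<mu>\<^sup>2) + Bi' (\<mu>\<^sup>2)) / (\<mu> * Ai (\<mu>\<^sup>2) + Ai' (\<mu>\<^sup>2))"
  shows "C * exp (\<mu> * x) * Ai (\<mu>\<^sup>2 + x) + exp (\<mu> * x) * Bi (\<mu>\<^sup>2 + x)
       < C * exp (\<mu> * y) * Ai (\<mu>\<^sup>2 + y) + exp (\<mu> * y) * Bi (\<mu>\<^sup>2 + y)"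
proof -
  define a where "a x = \<mu> * Ai x + Ai' x" for x
  define b where "b x = \<mu> * Bi x + Bi' x" for x
  have pos: "C * a t + b t > 0" if "\<mu>\<^sup>2 < t" for t
  proof -
    have "- C = b (\<mu>\<^sup>2) / a (\<mu>\<^sup>2)" unfolding C a_def b_def by (simp add: minus_divide_left)
    then have "b t / a t < - C"
      using airy_quotient_strict_antimono[OF assms(1) order_refl that] unfolding a_def b_def by simp
    moreover have "a t < 0" using mult_Ai_add_Ai'_neg[OF assms(1)] that unfolding a_def by simp
    ultimately show ?thesis by (simp add: divide_less_eq)
  qed
  show ?thesis
  proof (rule DERIV_pos_imp_increasing_open[OF \<open>x < y\<close>])
    fix z assume "x < z" "z < y"
    then have "exp (\<mu> * z) * (C * a (\<mu>\<^sup>2 + z) + b (\<mu>\<^sup>2 + z)) > 0"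
      using pos[of "\<mu>\<^sup>2 + z"] assms by simp
    moreover have "((\<lambda>z. C * exp (\<mu> * z) * Ai (\<mu>\<^sup>2 + z) + exp (\<mu> * z) * Bi (\<mu>\<^sup>2 + z))
        has_real_derivative exp (\<mu> * z) * (C * a (\<mu>\<^sup>2 + z) + b (\<mu>\<^sup>2 + z))) (at z)"
      unfolding a_def b_def by (auto intro!: derivative_eq_intros simp: algebra_simps)
    ultimately show "\<exists>d. ((\<lambda>z. C * exp (\<mu> * z) * Ai (\<mu>\<^sup>2 + z) + exp (\<mu> * z) * Bi (\<mu>\<^sup>2 + z))
        has_real_derivative d) (at z) \<and> d > 0" by blast
  next
    show "continuous_on {x..y} (\<lambda>z. C * exp (\<mu> * z) * Ai (\<mu>\<^sup>2 + z) + exp (\<mu> * z) * Bi (\<mu>\<^sup>2 + z))"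
      by (rule DERIV_continuous_on) (auto intro!: derivative_eq_intros)
  qed
qed

theorem lemma2p8:
  fixes \<mu> :: real
  assumes "\<mu> \<ge> 0"
  defines "\<phi> \<equiv> (\<lambda>x. pi * exp (\<mu> * x) * Ai (\<mu>\<^sup>2 + x))"
    and "\<psi> \<equiv> (\<lambda>x. (- (\<mu> * Bi (\<mu>\<^sup>2) + deriv Bi (\<mu>\<^sup>2)) / (\<mu> * Ai (\<mu>\<^sup>2) + deriv Ai (\<mu>\<^sup>2))) * exp (\<mu> * x) * Ai (\<mu>\<^sup>2 + x) + exp (\<mu> * x) * Bi (\<mu>\<^sup>2 + x))"
  shows "(\<forall>x y. 0 \<le> x \<longrightarrow> x < y \<longrightarrow> \<phi> y < \<phi> x) \<and>
         (\<forall>x y. 0 \<le> x \<longrightarrow> x < y \<longrightarrow> \<psi> x < \<psi> y)"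
  using exp_mult_Ai_strict_antimono[OF assms(1)] exp_mult_airy_combination_strict_mono[OF assms(1)]
  unfolding \<phi>_def \<psi>_def deriv_Ai deriv_Bi by (simp add: mult.assoc)

end
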